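(* For all finite sets of formulas $\Gamma,\Delta$: if the sequent $\Gamma\Rightarrow\Delta$ is provable in $\mathsf{CLp}$, then $\Gamma\Vdash^{cf}\Delta$.
   Context: Fix a countably infinite set $\mathsf{At}$ of atoms. Formulas are built from atoms and the constant $\bot$ using the binary connectives $\land,\lor,\to$. All contexts are finite sets (not multisets) of formulas; a comma denotes union; a subscript $\mathsf{At}$ indicates a finite set of atoms. An atomic sequent has the form $\Gamma_{\mathsf{At}} \Rightarrow \Delta_{\mathsf{At}}$. An atomic rule has finitely many (possibly zero) atomic sequents as premises and one atomic sequent as conclusion; a rule with zero premises is an atomic axiom. A base is a (possibly empty) set of atomic rules; $\mathcal{C}\supseteq\mathcal{B}$ ($\mathcal{C}$ extends $\mathcal{B}$) if $\mathcal{C}$ contains every rule of $\mathcal{B}$. Derivability $\vdash_{\mathcal{B}}$ of atomic sequents is the least relation such that: (Axiom/Weakening) if an atomic axiom with conclusion $\Gamma_{\mathsf{At}}\Rightarrow\Delta_{\mathsf{At}}$ is in $\mathcal{B}$, then $\vdash_{\mathcal{B}} \Theta_{\mathsf{At}},\Gamma_{\mathsf{At}}\Rightarrow\Delta_{\mathsf{At}},\Sigma_{\mathsf{At}}$ for all sets of atoms $\Theta_{\mathsf{At}},\Sigma_{\mathsf{At}}$; (Mix) if a rule with premises $\Gamma^i_{\mathsf{At}}\Rightarrow\Delta^i_{\mathsf{At}}$ ($1\le i\le n$) and conclusion $\Gamma_{\mathsf{At}}\Rightarrow\Delta_{\mathsf{At}}$ is in $\mathcal{B}$ and $\vdash_{\mathcal{B}}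 \Theta^i_{\mathsf{At}},\Gamma^i_{\mathsf{At}}\Rightarrow\Delta^i_{\mathsf{At}},\Sigma^i_{\mathsf{At}}$ for each $i$, then $\vdash_{\mathcal{B}} \Theta^1_{\mathsf{At}},\dots,\Theta^n_{\mathsf{At}},\Gamma_{\mathsf{At}}\Rightarrow\Delta_{\mathsf{At}},\Sigma^1_{\mathsf{At}},\dots,\Sigma^n_{\mathsf{At}}$. Support $\Vdash_{\mathcal{B}}$: (At) $\Vdash_{\mathcal{B}}\Gamma_{\mathsf{At}}$ iff $\vdash_{\mathcal{B}}\ \Rightarrow\Gamma_{\mathsf{At}}$; ($\land$) $\Vdash_{\mathcal{B}} A\land B,\Gamma$ iff $\Vdash_{\mathcal{B}}A,\Gamma$ and $\Vdash_{\mathcal{B}}B,\Gamma$; ($\lor$) $\Vdash_{\mathcal{B}}A\lor B,\Gamma$ iff $\Vdash_{\mathcal{B}}A,B,\Gamma$; ($\to$) $\Vdash_{\mathcal{B}}A\to B,\Gamma$ iff $A\Vdash_{\mathcal{B}}B,\Gamma$; ($\bot$) $\Vdash_{\mathcal{B}}\bot,\Gamma$ iff $\Vdash_{\mathcal{B}}\Gamma$; (Inf) for $n\ge1$, $\{A^1,\dots,A^n\}\Vdash_{\mathcal{B}}\Delta$ iff for every $\mathcal{C}\supseteq\mathcal{B}$ and all sets of atoms $\Theta^1_{\mathsf{At}},\dots,\Theta^n_{\mathsf{At}}$, if $\Vdash_{\mathcal{C}}\Theta^i_{\mathsf{At}},A^i$ for all $i$ then $\Vdash_{\mathcal{C}}\Theta^1_{\mathsf{At}},\dots,\Theta^n_{\mathsf{At}},\Delta$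 (and $\varnothing\Vdash_{\mathcal{B}}\Delta$ means $\Vdash_{\mathcal{B}}\Delta$). The atomic identity rule $\mathsf{Ainit}$ is the atomic axiom $\Gamma_{\mathsf{At}},p\Rightarrow p,\Delta_{\mathsf{At}}$. $\mathcal{HS}$ is the base consisting of all instances of $\mathsf{Ainit}$ (all atoms $p$, all sets of atoms). Cut-free validity: $\Gamma\Vdash^{cf}\Delta$ iff $\Gamma\Vdash_{\mathcal{B}}\Delta$ for every base $\mathcal{B}\supseteq\mathcal{HS}$. $\mathsf{CLp}$ is the sequent calculus on sequents $\Gamma\Rightarrow\Delta$ (finite sets of formulas) with rules: $\mathsf{init}$: $\Gamma,A\Rightarrow A,\Delta$; $L\bot$: $\Gamma,\bot\Rightarrow\Delta$; $R\bot$: from $\Gamma\Rightarrow\Delta$ infer $\Gamma\Rightarrow\bot,\Delta$; $L\land$: from $A,B,\Gamma\Rightarrow\Delta$ infer $A\land B,\Gamma\Rightarrow\Delta$; $R\land$: from $\Gamma\Rightarrow\Delta,A$ and $\Gamma'\Rightarrow\Delta',B$ infer $\Gamma,\Gamma'\Rightarrow\Delta,\Delta',A\land B$; $L\lor$: from $A,\Gamma\Rightarrow\Delta$ and $B,\Gamma'\Rightarrow\Delta'$ infer $A\lor B,\Gamma,\Gamma'\Rightarrow\Delta,\Delta'$; $R\lor$: from $\Gamma\Rightarrow\Delta,A,B$ infer $\Gamma\Rightarrow\Delta,A\lor B$; $L\to$: from $\Gamma\Rightarrow\Delta,A$ and $B,\Gamma'\Rightarrow\Delta'$ infer $A\to B,\Gamma,\Gamma'\Rightarrow\Delta,\Delta'$;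 $R\to$: from $A,\Gamma\Rightarrow\Delta,B$ infer $\Gamma\Rightarrow\Delta,A\to B$. *)

theory Defs
  imports Main
begin

datatype form = Atom nat | Bot | Conj form form | Disj form form | Imp form form

fun is_atom :: "form \<Rightarrow> bool" where
  "is_atom (Atom _) = True"
| "is_atom _ = False"

type_synonym aseq = "nat set \<times> nat set"
type_synonym arule = "aseq list \<times> aseq"
type_synonym base = "arule set"

definition wf_aseq :: "aseq \<Rightarrow> bool" where
  "wf_aseq s \<longleftrightarrow> finite (fst s) \<and> finite (snd s)"

definition wf_rule :: "arule \<Rightarrow> bool" where
  "wf_rule r \<longleftrightarrow> (\<forall>s\<in>set (fst r). wf_aseq s) \<and> wf_aseq (snd r)"

definition wf_base :: "base \<Rightarrow> bool" where
  "wf_base B \<longleftrightarrow> (\<forall>r\<in>B. wf_rule r)"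

inductive deriv :: "base \<Rightarrow> nat set \<Rightarrow> nat set \<Rightarrow> bool" for B where
  axiom: "([], (G, D)) \<in> B \<Longrightarrow> finite Th \<Longrightarrow> finite Si \<Longrightarrow>
            deriv B (Th \<union> G) (D \<union> Si)"
| mix: "(ps, (G, D)) \<in> B \<Longrightarrow>
          (\<forall>i<length ps. finite (Th i) \<and> finite (Si i) \<and>
              deriv B (Th i \<union> fst (ps ! i)) (snd (ps ! i) \<union> Si i)) \<Longrightarrow>
          deriv B ((\<Union>i<length ps. Th i) \<union> G) (D \<union> (\<Union>i<length ps. Si i))"

fun wt :: "form \<Rightarrow> nat" where
  "wt (Atom _) = 0"
| "wt Bot = 1"
| "wt (Conj A B) = wt A + wt B + 1"
| "wt (Disj A B) = wt A + wt B + 1"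
| "wt (Imp A B) = wt A + wt B + 1"

lemma some_na: "\<not>(\<forall>A\<in>G. is_atom A) \<Longrightarrow> (SOME A. A\<in>G \<and> \<not>is_atom A) \<in> G \<and> \<not> is_atom (SOME A. A\<in>G \<and> \<not>is_atom A)"
  by (metis (mono_tags, lifting) someI_ex)
lemma sum_rem: "finite G \<Longrightarrow> A \<in> G \<Longrightarrow> sum wt G = wt A + sum wt (G - {A})"
  by (simp add: sum.remove)
lemma sum_ins: "sum wt (insert X S) \<le> wt X + sum wt S"
  by (cases "finite S") (auto simp: sum.insert_if)
lemma sum_atoms: "sum wt (Atom ` T \<union> S) \<le> sum wt S"
proof (cases "finite (Atom ` T \<union> S)")
  case True
  then have "sum wt (Atom ` T \<union> S) \<le> sum wt (Atom ` T) + sum wt S" by (simp add: sum_Un_nat)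
  moreover have "sum wt (Atom ` T) = 0" by (simp add: sum.neutral)
  ultimately show ?thesis by simp
qed simp
lemma L: "finite G \<Longrightarrow> \<exists>x\<in>G. \<not>is_atom x \<Longrightarrow> K = (SOME A. A\<in>G \<and> \<not>is_atom A) \<Longrightarrow> sum wt G = wt K + sum wt (G - {K})"
  using some_na[of G] sum_rem by auto
text \<open>If \<Gamma> contains a non-atomic formula, one such formula
  is (arbitrarily) chosen and decomposed by the corresponding clause.\<close>

function supp :: "base \<Rightarrow> form set \<Rightarrow> bool" where
  "supp B \<Gamma> =
    (if \<not> finite \<Gamma> then False
     else if (\<forall>A\<in>\<Gamma>. is_atom A) then deriv B {} {p. Atom p \<in> \<Gamma>}
     else (let A = (SOME A. A \<in> \<Gamma> \<and> \<not> is_atom A); \<Gamma>' = \<Gamma> - {A} in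
       (case A of
          Atom _ \<Rightarrow> False
        | Bot \<Rightarrow> supp B \<Gamma>'
        | Conj X Y \<Rightarrow> supp B (insert X \<Gamma>') \<and> supp B (insert Y \<Gamma>')
        | Disj X Y \<Rightarrow> supp B (insert X (insert Y \<Gamma>'))
        | Imp X Y \<Rightarrow> (\<forall>C. wf_base C \<and> B \<subseteq> C \<longrightarrow>
              (\<forall>Th. finite Th \<longrightarrow> supp C (insert X (Atom ` Th)) \<longrightarrow>
                    supp C (insert Y (Atom ` Th \<union> \<Gamma>')))))))"
  by pat_completeness auto
termination
  apply (relation "measure (\<lambda>(B, \<Gamma>). sum wt \<Gamma>)")
  apply simp
  apply (simp_all add: Let_def)
  subgoal by (drule (2) L) simp
  subgoal for G x xa X Y
    using L[of G "Conj X Y"] sum_ins[of X "G - {Conj X Y}"] by (drule_tac sym) simp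
  subgoal for G x xa X Y
    using L[of G "Conj X Y"] sum_ins[of Y "G - {Conj X Y}"] by (drule_tac sym) simp
  subgoal for G x xa X Y
    using L[of G "Disj X Y"] sum_ins[of X "insert Y (G - {Disj X Y})"] sum_ins[of Y "G - {Disj X Y}"] by (drule_tac sym) simp
  subgoal for B G x xa X Y C T
    using L[of G "Imp X Y"] sum_ins[of X "Atom ` T"] sum.neutral[of "Atom ` T" wt] by (drule_tac sym) simp
  subgoal for B G x xa X Y C T
    using L[of G "Imp X Y"] sum_ins[of Y "Atom ` T \<union> (G - {Imp X Y})"] sum_atoms[of T "G - {Imp X Y}"] by (drule_tac sym) simp
  done

text \<open>Since the
  context is a set of distinct formulas, the atom sets \<open>\<Theta>\<^sup>i\<close> are indexed by the
  formulas of the context.\<close>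

definition supp_ctx :: "base \<Rightarrow> form set \<Rightarrow> form set \<Rightarrow> bool" where
  "supp_ctx B \<Gamma> \<Delta> \<longleftrightarrow>
     (if \<Gamma> = {} then supp B \<Delta>
      else (\<forall>C. wf_base C \<and> B \<subseteq> C \<longrightarrow>
             (\<forall>Th :: form \<Rightarrow> nat set.
                (\<forall>A\<in>\<Gamma>. finite (Th A) \<and> supp C (insert A (Atom ` Th A))) \<longrightarrow>
                supp C (Atom ` (\<Union>A\<in>\<Gamma>. Th A) \<union> \<Delta>))))"

definition HS :: base where
  "HS = {([], (insert p G, insert p D)) | p G D. finite G \<and> finite D}"

definition cf_valid :: "form set \<Rightarrow> form set \<Rightarrow> bool" where
  "cf_valid \<Gamma> \<Delta> \<longleftrightarrow> (\<forall>B. wf_base B \<and> HS \<subseteq> B \<longrightarrow> supp_ctx B \<Gamma> \<Delta>)"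

inductive CLp :: "form set \<Rightarrow> form set \<Rightarrow> bool" where
  init: "finite G \<Longrightarrow> finite D \<Longrightarrow> CLp (insert A G) (insert A D)"
| LBot: "finite G \<Longrightarrow> finite D \<Longrightarrow> CLp (insert Bot G) D"
| RBot: "CLp G D \<Longrightarrow> CLp G (insert Bot D)"
| LConj: "CLp (insert A (insert B G)) D \<Longrightarrow> CLp (insert (Conj A B) G) D"
| RConj: "CLp G (insert A D) \<Longrightarrow> CLp G' (insert B D') \<Longrightarrow>
            CLp (G \<union> G') (insert (Conj A B) (D \<union> D'))"
| LDisj: "CLp (insert A G) D \<Longrightarrow> CLp (insert B G') D' \<Longrightarrow>
            CLp (insert (Disj A B) (G \<union> G')) (D \<union> D')"
| RDisj: "CLp G (insert A (insert B D)) \<Longrightarrow> CLp G (insert (Disj A B) D)"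
| LImp: "CLp G (insert A D) \<Longrightarrow> CLp (insert B G') D' \<Longrightarrow>
            CLp (insert (Imp A B) (G \<union> G')) (D \<union> D')"
| RImp: "CLp (insert A G) (insert B D) \<Longrightarrow> CLp G (insert (Imp A B) D)"

end

theory Submission
  imports Defs "HOL-Library.Multiset"
begin

(* Support decomposes an arbitrarily chosen non-atomic formula, so the first task is to show that
  the choice is immaterial: the variant supp_list, which decomposes formulas from the left, is
  invariant under permutation (two decomposition steps commute) and under contraction, and it
  agrees with supp. This yields the clause of each connective for any formula of a context,
  weakening, monotonicity in the base, and a cut principle: if A, \<Gamma> is supported and A supports
  \<Delta>, then \<Gamma>, \<Delta> is supported. With these, every rule of CLp preserves validity in every base. *)

declare supp.simps [simp del]

lemma deriv_mono_base:
  assumes "deriv B G D" and "B \<subseteq> C"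
  shows "deriv C G D"
  using assms by induction (auto intro: deriv.axiom deriv.mix)

lemma deriv_weaken_right:
  assumes "deriv B G D" and "finite S"
  shows "deriv B G (D \<union> S)"
  using assms
proof induction
  case (axiom G D Th Si)
  then show ?case using deriv.axiom[of G D B Th "Si \<union> S"] by (simp add: Un_assoc)
next
  case (mix ps G D Th Si)
  show ?case
  proof (cases ps)
    case Nil
    then show ?thesis using mix deriv.axiom[of G D B "{}" S] by simp
  next
    case Cons
    let ?Si = "Si(0 := Si 0 \<union> S)"
    have "deriv B ((\<Union>i<length ps. Th i) \<union> G) (D \<union> (\<Union>i<length ps. ?Si i))"
      using mix by (intro deriv.mix) (auto simp: Un_assoc)
    moreover have "(\<Union>i<length ps. ?Si i) = (\<Union>i<length ps. Si i) \<union> S"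
    proof
      show "(\<Union>i<length ps. ?Si i) \<subseteq> (\<Union>i<length ps. Si i) \<union> S" by auto
      have "0 \<in> {..<length ps}" "S \<subseteq> ?Si 0" "\<And>i. Si i \<subseteq> ?Si i"
        using Cons by auto
      then show "(\<Union>i<length ps. Si i) \<union> S \<subseteq> (\<Union>i<length ps. ?Si i)" by blast
    qed
    ultimately show ?thesis by (simp add: Un_assoc)
  qed
qed

(* Unlike size, weight decreases when Disj X Y is replaced by X and Y. *)
fun weight :: "form \<Rightarrow> nat" where
  "weight (Atom _) = 1"
| "weight Bot = 1"
| "weight (Conj A B) = weight A + weight B + 1"
| "weight (Disj A B) = weight A + weight B + 1"
| "weight (Imp A B) = weight A + weight B + 1"

abbreviation weights :: "form list \<Rightarrow> nat" where
  "weights xs \<equiv> sum_list (map weight xs)"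

lemma weights_mset_eq: "mset xs = mset ys \<Longrightarrow> weights xs = weights ys"
  by (metis mset_map sum_mset_sum_list)

(* supp_list B At xs is the support of Atom ` At together with the formulas of xs,
  decomposed from the left. *)
function supp_list :: "base \<Rightarrow> nat set \<Rightarrow> form list \<Rightarrow> bool" where
  "supp_list B At [] = deriv B {} At"
| "supp_list B At (Atom p # xs) = supp_list B (insert p At) xs"
| "supp_list B At (Bot # xs) = supp_list B At xs"
| "supp_list B At (Conj X Y # xs) = (supp_list B At (X # xs) \<and> supp_list B At (Y # xs))"
| "supp_list B At (Disj X Y # xs) = supp_list B At (X # Y # xs)"
| "supp_list B At (Imp X Y # xs) = (\<forall>C. wf_base C \<and> B \<subseteq> C \<longrightarrow>
      (\<forall>Th. finite Th \<longrightarrow> supp_list C Th [X] \<longrightarrow> supp_list C (At \<union> Th) (Y # xs)))"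
  by pat_completeness auto
termination
  by (relation "measure (\<lambda>(_, _, xs). weights xs)") auto

lemma supp_list_mono_base: "supp_list B At xs \<Longrightarrow> B \<subseteq> C \<Longrightarrow> supp_list C At xs"
proof (induction B At xs arbitrary: C rule: supp_list.induct)
  case (1 B At)
  then show ?case by (auto intro: deriv_mono_base)
next
  case (6 B At X Y xs)
  then show ?case by (meson order_trans supp_list.simps(6))
qed auto

lemma supp_list_weaken_atoms:
  "supp_list B At xs \<Longrightarrow> finite At' \<Longrightarrow> supp_list B (At \<union> At') xs"
proof (induction B At xs rule: supp_list.induct)
  case (1 B At)
  then show ?case by (auto intro: deriv_weaken_right)
next
  case (6 B At X Y xs)
  then show ?case by (auto simp: Un_ac)
qed auto

lemma supp_list_weaken: "supp_list B At xs \<Longrightarrow> supp_list B At (F # xs)"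
proof (induction F arbitrary: B At xs)
  case (Atom p)
  then show ?case using supp_list_weaken_atoms[of B At xs "{p}"] by simp
next
  case (Imp X Y)
  have "supp_list C (At \<union> Th) (Y # xs)" if "B \<subseteq> C" "finite Th" for C Th
    using Imp that by (blast intro: supp_list_mono_base supp_list_weaken_atoms)
  then show ?case by simp
qed auto

lemma supp_list_atomic:
  "\<forall>F\<in>set xs. is_atom F \<Longrightarrow> supp_list B At xs = deriv B {} (At \<union> {p. Atom p \<in> set xs})"
proof (induction xs arbitrary: At)
  case (Cons F xs)
  then obtain p where "F = Atom p" by (cases F) auto
  moreover have "insert p At \<union> {q. Atom q \<in> set xs} = At \<union> {q. Atom q \<in> set (Atom p # xs)}"
    by auto
  ultimately show ?case using Cons by simp
qed simp

(* One step of supp_list on a head formula, the rest of the computation being the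
  continuation K. *)
fun decompose :: "form \<Rightarrow> (base \<Rightarrow> nat set \<Rightarrow> form list \<Rightarrow> bool) \<Rightarrow> base \<Rightarrow> nat set \<Rightarrow> bool"
  where
  "decompose (Atom p) K B At = K B (insert p At) []"
| "decompose Bot K B At = K B At []"
| "decompose (Conj X Y) K B At = (K B At [X] \<and> K B At [Y])"
| "decompose (Disj X Y) K B At = K B At [X, Y]"
| "decompose (Imp X Y) K B At = (\<forall>C. wf_base C \<and> B \<subseteq> C \<longrightarrow>
      (\<forall>Th. finite Th \<longrightarrow> supp_list C Th [X] \<longrightarrow> K C (At \<union> Th) [Y]))"

fun components :: "form \<Rightarrow> form list set" where
  "components (Atom _) = {[]}"
| "components Bot = {[]}"
| "components (Conj X Y) = {[X], [Y]}"
| "components (Disj X Y) = {[X, Y]}"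
| "components (Imp X Y) = {[Y]}"

lemma supp_list_Cons:
  "supp_list B At (F # xs) = decompose F (\<lambda>B' At' zs. supp_list B' At' (zs @ xs)) B At"
  by (cases F) auto

lemma weights_components_less: "zs \<in> components F \<Longrightarrow> weights zs < weight F"
  by (cases F) auto

lemma decompose_cong:
  "(\<And>B' At' zs. zs \<in> components F \<Longrightarrow> K B' At' zs = K' B' At' zs) \<Longrightarrow>
    decompose F K B At = decompose F K' B At"
  by (cases F) auto

lemma decompose_mono:
  assumes "decompose F K B At" and "wf_base B" and "finite At"
    and "\<And>B' At' zs. zs \<in> components F \<Longrightarrow> wf_base B' \<Longrightarrow> B \<subseteq> B' \<Longrightarrow> finite At' \<Longrightarrow>
      K B' At' zs \<Longrightarrow> K' B' At' zs"
  shows "decompose F K' B At"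
  using assms by (cases F) auto

lemma decompose_Imp_commute:
  assumes "decompose (Imp X1 Y1) (\<lambda>B1 At1 zs1.
      decompose (Imp X2 Y2) (\<lambda>B2 At2 zs2. K B2 At2 zs1 zs2) B1 At1) B At"
  shows "decompose (Imp X2 Y2) (\<lambda>B1 At1 zs2.
      decompose (Imp X1 Y1) (\<lambda>B2 At2 zs1. K B2 At2 zs1 zs2) B1 At1) B At"
  unfolding decompose.simps
proof (intro allI impI)
  fix C Th C' Th'
  assume C: "wf_base C \<and> B \<subseteq> C" and "finite Th" "supp_list C Th [X2]"
    and C': "wf_base C' \<and> C \<subseteq> C'" and "finite Th'" "supp_list C' Th' [X1]"
  moreover have "supp_list C' Th [X2]"
    using \<open>supp_list C Th [X2]\<close> C' by (blast intro: supp_list_mono_base)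
  ultimately have "K C' (At \<union> Th' \<union> Th) [Y1] [Y2]"
    using assms by (auto dest: order_trans)
  then show "K C' (At \<union> Th \<union> Th') [Y1] [Y2]" by (simp add: Un_ac)
qed

lemma decompose_commute:
  "decompose F (\<lambda>B1 At1 zs1. decompose G (\<lambda>B2 At2 zs2. K B2 At2 zs1 zs2) B1 At1) B At =
   decompose G (\<lambda>B1 At1 zs2. decompose F (\<lambda>B2 At2 zs1. K B2 At2 zs1 zs2) B1 At1) B At"
proof (cases "\<exists>X1 Y1 X2 Y2. F = Imp X1 Y1 \<and> G = Imp X2 Y2")
  case True
  then show ?thesis by (auto intro!: decompose_Imp_commute)
next
  case False
  then show ?thesis by (cases F; cases G) (auto simp: insert_commute)
qed

lemma supp_list_pull_to_front:
  assumes perm: "\<And>B At u v. weights u < n \<Longrightarrow> mset u = mset v \<Longrightarrow> supp_list B At u = supp_list B At v"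
    and u: "mset u = mset (H # v)" and f: "\<And>zs. mset (f zs) = mset (zs @ v)"
    and weights_u: "weights u < n"
  shows "supp_list B At u = decompose H (\<lambda>B' At' zs. supp_list B' At' (f zs)) B At"
proof -
  have "supp_list B At u = supp_list B At (H # v)" using perm u weights_u by blast
  also have "\<dots> = decompose H (\<lambda>B' At' zs. supp_list B' At' (zs @ v)) B At"
    by (rule supp_list_Cons)
  also have "\<dots> = decompose H (\<lambda>B' At' zs. supp_list B' At' (f zs)) B At"
  proof (rule decompose_cong)
    fix B' At' zs assume "zs \<in> components H"
    then have "weights (zs @ v) < n"
      using weights_components_less[of zs H] weights_mset_eq[OF u] weights_u by simp
    then show "supp_list B' At' (zs @ v) = supp_list B' At' (f zs)" using perm f by metis
  qed
  finally show ?thesis .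
qed

lemma supp_list_perm: "mset xs = mset ys \<Longrightarrow> supp_list B At xs = supp_list B At ys"
proof (induction "weights xs" arbitrary: B At xs ys rule: less_induct)
  case less
  note pull = supp_list_pull_to_front[where n = "weights xs", OF less.hyps]
  show ?case
  proof (cases xs)
    case Nil
    then show ?thesis using less.prems by simp
  next
    case (Cons F xs')
    then obtain G ys' where ys: "ys = G # ys'" using less.prems by (cases ys) auto
    show ?thesis
    proof (cases "F = G")
      case True
      have "mset xs' = mset ys'" using less.prems Cons ys True by simp
      then show ?thesis unfolding Cons ys True supp_list_Cons
        by (intro decompose_cong less.hyps) (use Cons True weights_components_less in fastforce)+
    next
      case False
      define rest where "rest = remove1 G xs'"
      have "G \<in> set xs'"
        using less.prems Cons ys False by (metis list.set_intros(1) set_ConsD set_mset_mset)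
      then have xs': "mset xs' = mset (G # rest)" by (simp add: rest_def)
      have ys': "mset ys' = mset (F # rest)" using less.prems Cons ys xs' by simp
      have weights_ys: "weights ys = weights xs" using weights_mset_eq[OF less.prems] by simp
      have "supp_list B At xs = decompose F (\<lambda>B1 At1 zs1.
          decompose G (\<lambda>B2 At2 zs2. supp_list B2 At2 (zs1 @ zs2 @ rest)) B1 At1) B At"
        unfolding Cons supp_list_Cons
      proof (rule decompose_cong)
        fix B1 At1 zs1 assume "zs1 \<in> components F"
        then show "supp_list B1 At1 (zs1 @ xs') =
            decompose G (\<lambda>B2 At2 zs2. supp_list B2 At2 (zs1 @ zs2 @ rest)) B1 At1"
          by (intro pull[where v = "zs1 @ rest"])
            (use xs' Cons weights_components_less[of zs1 F] in auto)
      qed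
      also have "\<dots> = decompose G (\<lambda>B1 At1 zs2.
          decompose F (\<lambda>B2 At2 zs1. supp_list B2 At2 (zs1 @ zs2 @ rest)) B1 At1) B At"
        by (rule decompose_commute)
      also have "\<dots> = supp_list B At ys"
        unfolding ys supp_list_Cons
      proof (rule decompose_cong)
        fix B1 At1 zs2 assume "zs2 \<in> components G"
        then show "decompose F (\<lambda>B2 At2 zs1. supp_list B2 At2 (zs1 @ zs2 @ rest)) B1 At1 =
            supp_list B1 At1 (zs2 @ ys')"
          by (intro pull[where v = "zs2 @ rest", symmetric])
            (use ys' ys weights_ys weights_components_less[of zs2 G] in auto)
      qed
      finally show ?thesis .
    qed
  qed
qed

lemma supp_list_contract: "supp_list B At (F # F # xs) = supp_list B At (F # xs)"
proof (induction F arbitrary: B At xs)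
  case (Conj X Y)
  have "supp_list B At (Z # Conj X Y # xs) = supp_list B At (Conj X Y # Z # xs)" for Z
    by (rule supp_list_perm) simp
  then have "supp_list B At (Conj X Y # Conj X Y # xs) \<longleftrightarrow>
      (supp_list B At (X # xs) \<and> supp_list B At (Y # X # xs)) \<and>
      (supp_list B At (X # Y # xs) \<and> supp_list B At (Y # xs))"
    using Conj.IH by simp
  then show ?case using supp_list_weaken by auto
next
  case (Disj X Y)
  have "supp_list B At (Disj X Y # Disj X Y # xs) = supp_list B At (Disj X Y # X # Y # xs)"
    using supp_list_perm[of "X # Y # Disj X Y # xs" "Disj X Y # X # Y # xs"] by simp
  also have "\<dots> = supp_list B At (X # X # Y # Y # xs)"
    using supp_list_perm[of "X # Y # X # Y # xs"] by simp
  also have "\<dots> = supp_list B At (Y # Y # X # xs)"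
    using Disj.IH(1) supp_list_perm[of "X # Y # Y # xs"] by simp
  also have "\<dots> = supp_list B At (Disj X Y # xs)"
    using Disj.IH(2) supp_list_perm[of "Y # X # xs"] by simp
  finally show ?case .
next
  case (Imp X Y)
  have "supp_list C Th (Y # Imp X Y # xs) = supp_list C Th (Imp X Y # Y # xs)" for C Th
    by (rule supp_list_perm) simp
  then have LHS: "supp_list B At (Imp X Y # Imp X Y # xs) \<longleftrightarrow>
      (\<forall>C. wf_base C \<and> B \<subseteq> C \<longrightarrow> (\<forall>Th. finite Th \<longrightarrow> supp_list C Th [X] \<longrightarrow>
        (\<forall>C'. wf_base C' \<and> C \<subseteq> C' \<longrightarrow> (\<forall>Th'. finite Th' \<longrightarrow> supp_list C' Th' [X] \<longrightarrow>
          supp_list C' (At \<union> Th \<union> Th') (Y # xs)))))"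
    using Imp.IH(2) by simp
  show ?case
  proof
    assume "supp_list B At (Imp X Y # Imp X Y # xs)"
    then show "supp_list B At (Imp X Y # xs)" unfolding LHS by fastforce
  next
    assume single: "supp_list B At (Imp X Y # xs)"
    have "supp_list C' (At \<union> Th \<union> Th') (Y # xs)"
      if "wf_base C'" "B \<subseteq> C'" "finite Th" "finite Th'" "supp_list C' Th' [X]" for C' Th Th'
    proof -
      have "supp_list C' (At \<union> Th' \<union> Th) (Y # xs)"
        using single that by (auto intro: supp_list_weaken_atoms)
      then show ?thesis by (simp add: Un_ac)
    qed
    then show "supp_list B At (Imp X Y # Imp X Y # xs)" unfolding LHS by (meson order_trans)
  qed
qed auto

lemma supp_list_contract_member: "F \<in> set xs \<Longrightarrow> supp_list B At (F # xs) = supp_list B At xs"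
proof -
  assume "F \<in> set xs"
  then have "mset xs = mset (F # remove1 F xs)" by simp
  then show ?thesis
    using supp_list_contract[of B At F "remove1 F xs"] supp_list_perm[of "F # xs"] supp_list_perm
    by (metis mset.simps(2))
qed

lemma supp_list_append_remdups:
  "supp_list B At (zs @ remdups xs) = supp_list B At (zs @ xs)"
proof (induction xs arbitrary: zs)
  case (Cons F xs)
  show ?case
  proof (cases "F \<in> set xs")
    case True
    have "supp_list B At (zs @ F # xs) = supp_list B At (F # zs @ xs)"
      by (rule supp_list_perm) simp
    also have "\<dots> = supp_list B At (zs @ xs)"
      using True by (simp add: supp_list_contract_member)
    finally show ?thesis using True Cons.IH by simp
  next
    case False
    then show ?thesis using Cons.IH[of "zs @ [F]"] by simp
  qed
qed simp

lemma supp_list_set_eq: "set xs = set ys \<Longrightarrow> supp_list B At xs = supp_list B At ys"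
  by (metis append_Nil set_eq_iff_mset_eq_distinct distinct_remdups set_remdups
      supp_list_append_remdups supp_list_perm)

lemma weights_removeAll:
  "x \<in> set xs \<Longrightarrow> weight x + weights (removeAll x xs) \<le> weights xs"
  by (induction xs) (auto simp: sum_list_filter_le_nat removeAll_filter_not_eq)

lemma supp_atomic: "finite \<Gamma> \<Longrightarrow> \<forall>A\<in>\<Gamma>. is_atom A \<Longrightarrow> supp B \<Gamma> = deriv B {} {p. Atom p \<in> \<Gamma>}"
  by (simp add: supp.simps)

lemma supp_nonatomic:
  assumes "finite \<Gamma>" and "\<not> (\<forall>A\<in>\<Gamma>. is_atom A)"
  obtains K where "K \<in> \<Gamma>" and "\<not> is_atom K" and "supp B \<Gamma> = (case K of
          Atom _ \<Rightarrow> False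
        | Bot \<Rightarrow> supp B (\<Gamma> - {K})
        | Conj X Y \<Rightarrow> supp B (insert X (\<Gamma> - {K})) \<and> supp B (insert Y (\<Gamma> - {K}))
        | Disj X Y \<Rightarrow> supp B (insert X (insert Y (\<Gamma> - {K})))
        | Imp X Y \<Rightarrow> (\<forall>C. wf_base C \<and> B \<subseteq> C \<longrightarrow>
              (\<forall>Th. finite Th \<longrightarrow> supp C (insert X (Atom ` Th)) \<longrightarrow>
                    supp C (insert Y (Atom ` Th \<union> (\<Gamma> - {K}))))))"
proof
  let ?K = "SOME A. A \<in> \<Gamma> \<and> \<not> is_atom A"
  show "?K \<in> \<Gamma>" "\<not> is_atom ?K" using some_na[OF assms(2)] by simp_all
  show "supp B \<Gamma> = (case ?K of
          Atom _ \<Rightarrow> False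
        | Bot \<Rightarrow> supp B (\<Gamma> - {?K})
        | Conj X Y \<Rightarrow> supp B (insert X (\<Gamma> - {?K})) \<and> supp B (insert Y (\<Gamma> - {?K}))
        | Disj X Y \<Rightarrow> supp B (insert X (insert Y (\<Gamma> - {?K})))
        | Imp X Y \<Rightarrow> (\<forall>C. wf_base C \<and> B \<subseteq> C \<longrightarrow>
              (\<forall>Th. finite Th \<longrightarrow> supp C (insert X (Atom ` Th)) \<longrightarrow>
                    supp C (insert Y (Atom ` Th \<union> (\<Gamma> - {?K}))))))"
    unfolding supp.simps[of B \<Gamma>] Let_def using assms(1) by (simp add: assms(2))
qed

lemma supp_eq_supp_list: "finite At \<Longrightarrow> supp B (Atom ` At \<union> set xs) = supp_list B At xs"
proof (induction "weights xs" arbitrary: B At xs rule: less_induct)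
  case less
  let ?\<Gamma> = "Atom ` At \<union> set xs"
  have IH: "supp C (Atom ` At' \<union> set ys) = supp_list C At' ys"
    if "weights ys < weights xs" "finite At'" for C At' ys
    using less.hyps that by blast
  show ?case
  proof (cases "\<forall>A\<in>?\<Gamma>. is_atom A")
    case True
    moreover have "{p. Atom p \<in> ?\<Gamma>} = At \<union> {p. Atom p \<in> set xs}" by auto
    ultimately show ?thesis using less.prems by (simp add: supp_atomic supp_list_atomic)
  next
    case False
    have "finite ?\<Gamma>" using less.prems by simp
    then obtain K where "K \<in> ?\<Gamma>" and "\<not> is_atom K" and unfold: "supp B ?\<Gamma> = (case K of
          Atom _ \<Rightarrow> False
        | Bot \<Rightarrow> supp B (?\<Gamma> - {K})
        | Conj X Y \<Rightarrow> supp B (insert X (?\<Gamma> - {K})) \<and> supp B (insert Y (?\<Gamma> - {K}))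
        | Disj X Y \<Rightarrow> supp B (insert X (insert Y (?\<Gamma> - {K})))
        | Imp X Y \<Rightarrow> (\<forall>C. wf_base C \<and> B \<subseteq> C \<longrightarrow>
              (\<forall>Th. finite Th \<longrightarrow> supp C (insert X (Atom ` Th)) \<longrightarrow>
                    supp C (insert Y (Atom ` Th \<union> (?\<Gamma> - {K}))))))"
      using False by (rule supp_nonatomic)
    then have K: "K \<in> set xs" by auto
    define xs' where "xs' = removeAll K xs"
    have \<Gamma>': "?\<Gamma> - {K} = Atom ` At \<union> set xs'" using K \<open>\<not> is_atom K\<close> by (auto simp: xs'_def)
    have weights: "weight K + weights xs' \<le> weights xs"
      using weights_removeAll[OF K] by (simp add: xs'_def)
    have "supp_list B At xs = supp_list B At (K # xs')"
      using K by (intro supp_list_set_eq) (auto simp: xs'_def)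
    also have "\<dots> = supp B ?\<Gamma>"
    proof (cases K)
      case (Atom p)
      then show ?thesis using \<open>\<not> is_atom K\<close> by simp
    next
      case Bot
      then show ?thesis using unfold \<Gamma>' IH[of xs' At B] weights less.prems by simp
    next
      case (Conj X Y)
      then show ?thesis
        using unfold \<Gamma>' IH[of "X # xs'" At B] IH[of "Y # xs'" At B] weights less.prems by simp
    next
      case (Disj X Y)
      then show ?thesis using unfold \<Gamma>' IH[of "X # Y # xs'" At B] weights less.prems by simp
    next
      case (Imp X Y)
      have "supp C (insert X (Atom ` Th)) = supp_list C Th [X]"
        and "supp C (insert Y (Atom ` Th \<union> (Atom ` At \<union> set xs'))) =
          supp_list C (At \<union> Th) (Y # xs')"
        if "finite Th" for C Th
        using IH[of "[X]" Th C] IH[of "Y # xs'" "At \<union> Th" C] that less.prems weights Imp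
        by (simp_all add: image_Un Un_ac)
      then show ?thesis using unfold \<Gamma>' Imp by auto
    qed
    finally show ?thesis ..
  qed
qed

lemma supp_set_eq_supp_list: "supp B (set xs) = supp_list B {} xs"
  using supp_eq_supp_list[of "{}" B xs] by simp

lemma supp_finite: "supp B \<Gamma> \<Longrightarrow> finite \<Gamma>"
  by (subst (asm) supp.simps) (auto split: if_splits)

lemma supp_mono_base:
  assumes "supp B \<Gamma>" and "B \<subseteq> C"
  shows "supp C \<Gamma>"
proof -
  obtain xs where "set xs = \<Gamma>" using finite_list supp_finite[OF assms(1)] by blast
  then show ?thesis using assms supp_list_mono_base supp_set_eq_supp_list by metis
qed

lemma supp_weaken:
  assumes "supp B \<Gamma>" and "\<Gamma> \<subseteq> \<Gamma>'" and "finite \<Gamma>'"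
  shows "supp B \<Gamma>'"
proof -
  obtain xs ys where xs: "set xs = \<Gamma>" and ys: "set ys = \<Gamma>' - \<Gamma>"
    using assms finite_list supp_finite by (metis finite_Diff)
  have "supp_list B {} xs" using assms(1) xs supp_set_eq_supp_list by blast
  then have "supp_list B {} (ys @ xs)" by (induction ys) (auto intro: supp_list_weaken)
  moreover have "set (ys @ xs) = \<Gamma>'" using xs ys assms(2) by auto
  ultimately show ?thesis using supp_set_eq_supp_list by blast
qed

lemma supp_insert_Bot: "finite S \<Longrightarrow> supp B (insert Bot S) \<longleftrightarrow> supp B S"
  by (metis finite_list list.simps(15) supp_list.simps(3) supp_set_eq_supp_list)

lemma supp_insert_Conj:
  "finite S \<Longrightarrow> supp B (insert (Conj X Y) S) \<longleftrightarrow> supp B (insert X S) \<and> supp B (insert Y S)"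
  by (metis finite_list list.simps(15) supp_list.simps(4) supp_set_eq_supp_list)

lemma supp_insert_Disj:
  "finite S \<Longrightarrow> supp B (insert (Disj X Y) S) \<longleftrightarrow> supp B (insert X (insert Y S))"
  by (metis finite_list list.simps(15) supp_list.simps(5) supp_set_eq_supp_list)

lemma supp_insert_Imp:
  assumes "finite S"
  shows "supp B (insert (Imp X Y) S) \<longleftrightarrow> (\<forall>C. wf_base C \<and> B \<subseteq> C \<longrightarrow>
    (\<forall>Th. finite Th \<longrightarrow> supp C (insert X (Atom ` Th)) \<longrightarrow> supp C (insert Y (Atom ` Th \<union> S))))"
proof -
  obtain xs where xs: "set xs = S" using finite_list assms by blast
  have "supp C (insert X (Atom ` Th)) = supp_list C Th [X]"
    and "supp C (insert Y (Atom ` Th \<union> S)) = supp_list C Th (Y # xs)" if "finite Th" for C Th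
    using supp_eq_supp_list[OF that, of C "[X]"] supp_eq_supp_list[OF that, of C "Y # xs"] xs
    by simp_all
  then show ?thesis using supp_set_eq_supp_list[of B "Imp X Y # xs"] xs by simp
qed

lemma supp_list_cut:
  assumes "supp_list C At (A # xs)" and "wf_base C" and "finite At"
    and "\<And>C' T. wf_base C' \<Longrightarrow> C \<subseteq> C' \<Longrightarrow> finite T \<Longrightarrow> supp_list C' T [A] \<Longrightarrow> supp_list C' T es"
  shows "supp_list C At (xs @ es)"
  using assms
proof (induction "weights xs" arbitrary: C At xs rule: less_induct)
  case less
  show ?case
  proof (cases xs)
    case Nil
    then show ?thesis using less.prems by simp
  next
    case (Cons F rs)
    have "supp_list C At (F # A # rs)"
      using less.prems(1) Cons supp_list_perm[of "A # F # rs" "F # A # rs"] by simp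
    then have "decompose F (\<lambda>C' At' zs. supp_list C' At' (zs @ A # rs)) C At"
      by (simp only: supp_list_Cons)
    then have "decompose F (\<lambda>C' At' zs. supp_list C' At' ((zs @ rs) @ es)) C At"
    proof (rule decompose_mono)
      fix C' At' zs
      assume zs: "zs \<in> components F" and C': "wf_base C'" "C \<subseteq> C'" and "finite At'"
        and "supp_list C' At' (zs @ A # rs)"
      moreover have "supp_list C' At' (zs @ A # rs) = supp_list C' At' (A # zs @ rs)"
        by (rule supp_list_perm) simp
      moreover have "weights (zs @ rs) < weights xs"
        using weights_components_less[OF zs] Cons by simp
      ultimately show "supp_list C' At' ((zs @ rs) @ es)"
        using less.hyps less.prems(4) by (meson order_trans)
    qed (use less.prems in auto)
    then show ?thesis using Cons by (simp add: supp_list_Cons)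
  qed
qed

lemma supp_cut:
  assumes "supp C (insert A \<Gamma>)" and "wf_base C" and "finite \<Delta>"
    and "\<And>C' T. wf_base C' \<Longrightarrow> C \<subseteq> C' \<Longrightarrow> supp C' (insert A (Atom ` T)) \<Longrightarrow> supp C' (Atom ` T \<union> \<Delta>)"
  shows "supp C (\<Gamma> \<union> \<Delta>)"
proof -
  obtain xs es where xs: "set xs = \<Gamma>" and es: "set es = \<Delta>"
    using supp_finite[OF assms(1)] assms(3) finite_list by (metis finite_insert)
  have "supp_list C' T es" if "wf_base C'" "C \<subseteq> C'" "finite T" "supp_list C' T [A]" for C' T
    using assms(4) that supp_eq_supp_list[of T C' "[A]"] supp_eq_supp_list[of T C' es] es by simp
  moreover have "supp_list C {} (A # xs)" using assms(1) xs supp_set_eq_supp_list[of C "A # xs"] by simp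
  ultimately have "supp_list C {} (xs @ es)" using supp_list_cut assms(2) by blast
  then show ?thesis using supp_set_eq_supp_list[of C "xs @ es"] xs es by simp
qed

(* Clause (Inf) in all bases at once; the atom sets are finite since supp holds only of
  finite sets. *)
definition valid :: "form set \<Rightarrow> form set \<Rightarrow> bool" where
  "valid \<Gamma> \<Delta> \<longleftrightarrow> (\<forall>C Th. wf_base C \<longrightarrow> (\<forall>A\<in>\<Gamma>. supp C (insert A (Atom ` Th A))) \<longrightarrow>
      supp C (Atom ` (\<Union>A\<in>\<Gamma>. Th A) \<union> \<Delta>))"

lemma validI:
  "(\<And>C Th. wf_base C \<Longrightarrow> \<forall>A\<in>\<Gamma>. supp C (insert A (Atom ` Th A)) \<Longrightarrow>
      supp C (Atom ` (\<Union>A\<in>\<Gamma>. Th A) \<union> \<Delta>)) \<Longrightarrow> valid \<Gamma> \<Delta>"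
  unfolding valid_def by blast

lemma validD:
  "valid \<Gamma> \<Delta> \<Longrightarrow> wf_base C \<Longrightarrow> \<forall>A\<in>\<Gamma>. supp C (insert A (Atom ` Th A)) \<Longrightarrow>
      supp C (Atom ` (\<Union>A\<in>\<Gamma>. Th A) \<union> \<Delta>)"
  unfolding valid_def by blast

lemma supp_atoms_finite: "supp C (insert A (Atom ` T)) \<Longrightarrow> finite T"
  by (auto dest!: supp_finite finite_imageD simp: inj_on_def)

lemma finite_UN_supported:
  "finite \<Gamma> \<Longrightarrow> \<forall>A\<in>\<Gamma>. supp C (insert A (Atom ` Th A)) \<Longrightarrow> finite (\<Union>A\<in>\<Gamma>. Th A)"
  by (auto dest: supp_atoms_finite)

lemma valid_supp:
  assumes "valid \<Gamma> \<Delta>" and "wf_base C" and "finite U" and "finite \<Delta>"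
    and "\<And>A. A \<in> \<Gamma> \<Longrightarrow> \<exists>T \<subseteq> U. supp C (insert A (Atom ` T))"
  shows "supp C (Atom ` U \<union> \<Delta>)"
proof -
  obtain Th where Th: "\<And>A. A \<in> \<Gamma> \<Longrightarrow> Th A \<subseteq> U \<and> supp C (insert A (Atom ` Th A))"
    using assms(5) by metis
  then have "supp C (Atom ` (\<Union>A\<in>\<Gamma>. Th A) \<union> \<Delta>)" using assms(1,2) unfolding valid_def by blast
  then show ?thesis by (rule supp_weaken) (use Th assms(3,4) in auto)
qed

lemma valid_insert_supp:
  assumes "valid (insert A \<Gamma>) \<Delta>" and "finite \<Gamma>" and "finite \<Delta>"
    and "\<forall>X\<in>\<Gamma>. supp C (insert X (Atom ` Th X))" and "wf_base C'" and "C \<subseteq> C'"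
    and "supp C' (insert A (Atom ` T))"
  shows "supp C' (Atom ` (T \<union> (\<Union>X\<in>\<Gamma>. Th X)) \<union> \<Delta>)"
proof (rule valid_supp[OF assms(1,5)])
  show "finite (T \<union> (\<Union>X\<in>\<Gamma>. Th X))"
    using supp_atoms_finite[OF assms(7)] finite_UN_supported[OF assms(2,4)] by simp
  show "\<exists>U \<subseteq> T \<union> (\<Union>X\<in>\<Gamma>. Th X). supp C' (insert X (Atom ` U))" if "X \<in> insert A \<Gamma>" for X
    using that assms(4,6,7) by (auto intro: supp_mono_base)
qed fact

lemma valid_weaken_right:
  assumes "valid \<Gamma> \<Delta>" and "\<Delta> \<subseteq> \<Delta>'" and "finite \<Gamma>" and "finite \<Delta>'"
  shows "valid \<Gamma> \<Delta>'"
  unfolding valid_def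
proof (intro allI impI)
  fix C Th assume "wf_base C" and supported: "\<forall>A\<in>\<Gamma>. supp C (insert A (Atom ` Th A))"
  then have "supp C (Atom ` (\<Union>A\<in>\<Gamma>. Th A) \<union> \<Delta>)" using assms(1) unfolding valid_def by blast
  then show "supp C (Atom ` (\<Union>A\<in>\<Gamma>. Th A) \<union> \<Delta>')"
    by (rule supp_weaken) (use assms finite_UN_supported[OF assms(3) supported] in auto)
qed

lemma valid_init: "finite G \<Longrightarrow> finite D \<Longrightarrow> valid (insert A G) (insert A D)"
proof (rule validI)
  fix C Th
  assume "finite G" "finite D" and supported: "\<forall>X\<in>insert A G. supp C (insert X (Atom ` Th X))"
  moreover have "supp C (insert A (Atom ` Th A))" using supported by simp
  ultimately show "supp C (Atom ` (\<Union>X\<in>insert A G. Th X) \<union> insert A D)"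
    using finite_UN_supported[of "insert A G" C Th] by (elim supp_weaken) auto
qed

lemma valid_LBot: "finite G \<Longrightarrow> finite D \<Longrightarrow> valid (insert Bot G) D"
proof (rule validI)
  fix C Th
  assume "finite G" "finite D" and supported: "\<forall>X\<in>insert Bot G. supp C (insert X (Atom ` Th X))"
  moreover have "supp C (insert Bot (Atom ` Th Bot))" using supported by simp
  then have "supp C (Atom ` Th Bot)" using supp_insert_Bot supp_atoms_finite by blast
  ultimately show "supp C (Atom ` (\<Union>X\<in>insert Bot G. Th X) \<union> D)"
    using finite_UN_supported[of "insert Bot G" C Th] by (elim supp_weaken) auto
qed

lemma valid_LConj:
  assumes "valid (insert A (insert B G)) D" and "finite G" and "finite D"
  shows "valid (insert (Conj A B) G) D"
proof (rule validI)
  fix C Th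
  assume C: "wf_base C" and supported: "\<forall>X\<in>insert (Conj A B) G. supp C (insert X (Atom ` Th X))"
  let ?U = "\<Union>X\<in>insert (Conj A B) G. Th X"
  have "supp C (insert (Conj A B) (Atom ` Th (Conj A B)))" using supported by simp
  then have A: "supp C (insert A (Atom ` Th (Conj A B)))"
    and B: "supp C (insert B (Atom ` Th (Conj A B)))"
    using supp_insert_Conj supp_atoms_finite by blast+
  show "supp C (Atom ` ?U \<union> D)"
  proof (rule valid_supp[OF assms(1) C _ assms(3)])
    show "finite ?U" using finite_UN_supported[of "insert (Conj A B) G" C Th] assms(2) supported
      by simp
    show "\<exists>T \<subseteq> ?U. supp C (insert X (Atom ` T))" if "X \<in> insert A (insert B G)" for X
      using that A B supported by blast
  qed
qed

lemma valid_RConj: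
  assumes "valid G (insert A D)" and "valid G' (insert B D')"
    and "finite G" and "finite G'" and "finite D" and "finite D'"
  shows "valid (G \<union> G') (insert (Conj A B) (D \<union> D'))"
proof (rule validI)
  fix C Th assume C: "wf_base C" and supported: "\<forall>X\<in>G \<union> G'. supp C (insert X (Atom ` Th X))"
  let ?S = "Atom ` (\<Union>X\<in>G \<union> G'. Th X) \<union> (D \<union> D')"
  have finite: "finite ?S"
    using assms(3-6) finite_UN_supported[of "G \<union> G'" C Th] supported by simp
  have "supp C (Atom ` (\<Union>X\<in>G. Th X) \<union> insert A D)"
    using validD[OF assms(1) C] supported by simp
  then have "supp C (insert A ?S)" by (elim supp_weaken) (use finite in auto)
  moreover have "supp C (Atom ` (\<Union>X\<in>G'. Th X) \<union> insert B D')"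
    using validD[OF assms(2) C] supported by simp
  then have "supp C (insert B ?S)" by (elim supp_weaken) (use finite in auto)
  ultimately have "supp C (insert (Conj A B) ?S)" using supp_insert_Conj[OF finite] by blast
  then show "supp C (Atom ` (\<Union>X\<in>G \<union> G'. Th X) \<union> insert (Conj A B) (D \<union> D'))" by simp
qed

lemma valid_LDisj:
  assumes "valid (insert A G) D" and "valid (insert B G') D'"
    and "finite G" and "finite G'" and "finite D" and "finite D'"
  shows "valid (insert (Disj A B) (G \<union> G')) (D \<union> D')"
proof (rule validI)
  fix C Th
  assume C: "wf_base C" and supported: "\<forall>X\<in>insert (Disj A B) (G \<union> G'). supp C (insert X (Atom ` Th X))"
  let ?T = "Th (Disj A B)"
  let ?E = "Atom ` (\<Union>X\<in>G. Th X) \<union> D" and ?E' = "Atom ` (\<Union>X\<in>G'. Th X) \<union> D'"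
  have G: "\<forall>X\<in>G. supp C (insert X (Atom ` Th X))" and G': "\<forall>X\<in>G'. supp C (insert X (Atom ` Th X))"
    using supported by auto
  have finite: "finite ?E" "finite ?E'"
    using assms(3-6) finite_UN_supported[OF _ G] finite_UN_supported[OF _ G'] by auto
  have "supp C (insert (Disj A B) (Atom ` ?T))" using supported by simp
  then have "supp C (insert A (insert B (Atom ` ?T)))" using supp_insert_Disj supp_atoms_finite by blast
  then have "supp C (insert B (Atom ` ?T) \<union> ?E)"
  proof (rule supp_cut[OF _ C finite(1)])
    fix C' T assume "wf_base C'" "C \<subseteq> C'" "supp C' (insert A (Atom ` T))"
    then show "supp C' (Atom ` T \<union> ?E)"
      using valid_insert_supp[OF assms(1,3,5) G] by (simp add: image_Un Un_assoc)
  qed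
  then have "supp C (insert B (Atom ` ?T \<union> ?E))" by simp
  then have "supp C ((Atom ` ?T \<union> ?E) \<union> ?E')"
  proof (rule supp_cut[OF _ C finite(2)])
    fix C' T assume "wf_base C'" "C \<subseteq> C'" "supp C' (insert B (Atom ` T))"
    then show "supp C' (Atom ` T \<union> ?E')"
      using valid_insert_supp[OF assms(2,4,6) G'] by (simp add: image_Un Un_assoc)
  qed
  moreover have "(Atom ` ?T \<union> ?E) \<union> ?E' = Atom ` (\<Union>X\<in>insert (Disj A B) (G \<union> G'). Th X) \<union> (D \<union> D')"
    by auto
  ultimately show "supp C (Atom ` (\<Union>X\<in>insert (Disj A B) (G \<union> G'). Th X) \<union> (D \<union> D'))" by simp
qed

lemma valid_RDisj:
  assumes "valid G (insert A (insert B D))" and "finite G" and "finite D"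
  shows "valid G (insert (Disj A B) D)"
proof (rule validI)
  fix C Th assume C: "wf_base C" and supported: "\<forall>X\<in>G. supp C (insert X (Atom ` Th X))"
  let ?S = "Atom ` (\<Union>X\<in>G. Th X) \<union> D"
  have finite: "finite ?S" using assms(2,3) finite_UN_supported[OF _ supported] by simp
  have "supp C (insert A (insert B ?S))" using validD[OF assms(1) C supported] by simp
  then have "supp C (insert (Disj A B) ?S)" using supp_insert_Disj[OF finite] by blast
  then show "supp C (Atom ` (\<Union>X\<in>G. Th X) \<union> insert (Disj A B) D)" by simp
qed

lemma valid_LImp:
  assumes "valid G (insert A D)" and "valid (insert B G') D'"
    and "finite G" and "finite G'" and "finite D" and "finite D'"
  shows "valid (insert (Imp A B) (G \<union> G')) (D \<union> D')"
proof (rule validI)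
  fix C Th
  assume C: "wf_base C" and supported: "\<forall>X\<in>insert (Imp A B) (G \<union> G'). supp C (insert X (Atom ` Th X))"
  let ?T = "Th (Imp A B)"
  let ?E = "Atom ` (?T \<union> (\<Union>X\<in>G'. Th X)) \<union> D'"
  have G: "\<forall>X\<in>G. supp C (insert X (Atom ` Th X))" and G': "\<forall>X\<in>G'. supp C (insert X (Atom ` Th X))"
    using supported by auto
  have imp: "supp C (insert (Imp A B) (Atom ` ?T))" using supported by simp
  have finite: "finite ?E"
    using assms(4,6) finite_UN_supported[OF _ G'] supp_atoms_finite[OF imp] by simp
  have "supp C (Atom ` (\<Union>X\<in>G. Th X) \<union> insert A D)" using validD[OF assms(1) C G] .
  then have "supp C (insert A (Atom ` (\<Union>X\<in>G. Th X) \<union> D))" by simp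
  then have "supp C ((Atom ` (\<Union>X\<in>G. Th X) \<union> D) \<union> ?E)"
  proof (rule supp_cut[OF _ C finite])
    fix C' T assume C': "wf_base C'" "C \<subseteq> C'" and A: "supp C' (insert A (Atom ` T))"
    then have "supp C' (insert B (Atom ` T \<union> Atom ` ?T))"
      using imp supp_insert_Imp supp_atoms_finite[OF A] supp_atoms_finite[OF imp] by blast
    then have "supp C' (insert B (Atom ` (T \<union> ?T)))" by (simp add: image_Un)
    then have "supp C' (Atom ` (T \<union> ?T \<union> (\<Union>X\<in>G'. Th X)) \<union> D')"
      using valid_insert_supp[OF assms(2,4,6) G' C'] by blast
    then show "supp C' (Atom ` T \<union> ?E)" by (simp add: image_Un Un_assoc)
  qed
  moreover have "(Atom ` (\<Union>X\<in>G. Th X) \<union> D) \<union> ?E =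
      Atom ` (\<Union>X\<in>insert (Imp A B) (G \<union> G'). Th X) \<union> (D \<union> D')"
    by auto
  ultimately show "supp C (Atom ` (\<Union>X\<in>insert (Imp A B) (G \<union> G'). Th X) \<union> (D \<union> D'))" by simp
qed

lemma valid_RImp:
  assumes "valid (insert A G) (insert B D)" and "finite G" and "finite D"
  shows "valid G (insert (Imp A B) D)"
proof (rule validI)
  fix C Th assume C: "wf_base C" and supported: "\<forall>X\<in>G. supp C (insert X (Atom ` Th X))"
  let ?S = "Atom ` (\<Union>X\<in>G. Th X) \<union> D"
  have finite: "finite ?S" using assms(2,3) finite_UN_supported[OF _ supported] by simp
  have "supp C (insert (Imp A B) ?S)"
    unfolding supp_insert_Imp[OF finite]
  proof (intro allI impI)
    fix C' T assume C': "wf_base C' \<and> C \<subseteq> C'" and "finite T" and "supp C' (insert A (Atom ` T))"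
    then have "supp C' (Atom ` (T \<union> (\<Union>X\<in>G. Th X)) \<union> insert B D)"
      using valid_insert_supp[OF assms(1,2) _ supported] assms(3) by blast
    then show "supp C' (insert B (Atom ` T \<union> ?S))" by (simp add: image_Un Un_assoc)
  qed
  then show "supp C (Atom ` (\<Union>X\<in>G. Th X) \<union> insert (Imp A B) D)" by simp
qed

lemma CLp_finite: "CLp \<Gamma> \<Delta> \<Longrightarrow> finite \<Gamma> \<and> finite \<Delta>"
  by (induction rule: CLp.induct) auto

theorem CLp_valid: "CLp \<Gamma> \<Delta> \<Longrightarrow> valid \<Gamma> \<Delta>"
proof (induction rule: CLp.induct)
  case (init G D A)
  then show ?case by (rule valid_init)
next
  case (LBot G D)
  then show ?case by (rule valid_LBot)
next
  case (RBot G D)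
  then show ?case using CLp_finite[OF RBot.hyps] valid_weaken_right[of G D "insert Bot D"] by auto
next
  case (LConj A B G D)
  then show ?case using CLp_finite[OF LConj.hyps] by (simp add: valid_LConj)
next
  case (RConj G A D G' B D')
  then show ?case using CLp_finite[OF RConj.hyps(1)] CLp_finite[OF RConj.hyps(2)]
    by (simp add: valid_RConj)
next
  case (LDisj A G D B G' D')
  then show ?case using CLp_finite[OF LDisj.hyps(1)] CLp_finite[OF LDisj.hyps(2)]
    by (simp add: valid_LDisj)
next
  case (RDisj G A B D)
  then show ?case using CLp_finite[OF RDisj.hyps] by (simp add: valid_RDisj)
next
  case (LImp G A D B G' D')
  then show ?case using CLp_finite[OF LImp.hyps(1)] CLp_finite[OF LImp.hyps(2)]
    by (simp add: valid_LImp)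
next
  case (RImp A G B D)
  then show ?case using CLp_finite[OF RImp.hyps] by (simp add: valid_RImp)
qed

lemma supp_ctx_if_valid: "valid \<Gamma> \<Delta> \<Longrightarrow> wf_base B \<Longrightarrow> supp_ctx B \<Gamma> \<Delta>"
  unfolding supp_ctx_def by (auto dest: validD[where Th = "\<lambda>_. {}"] validD)

theorem mainTheorem6:
  fixes \<Gamma> \<Delta> :: "form set"
  assumes "finite \<Gamma>" and "finite \<Delta>"
      and "CLp \<Gamma> \<Delta>"
  shows "cf_valid \<Gamma> \<Delta>"
  unfolding cf_valid_def using supp_ctx_if_valid[OF CLp_valid[OF assms(3)]] by blast

end
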